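(* Let $\mathcal{N}=(\mathcal{S},\mathcal{C},\mathcal{R})$ be a chemical reaction network. The following are equivalent: (i) $\ker(J_c(f_\kappa))\cap\Gamma\neq\{0\}$ for all $\kappa\in\mathbb{R}_+^{\mathcal{R}}$ and all $c\in\mathbb{R}^n_+$; (ii) $\det(\mathcal{Y}(R)_I)\det(\Gamma(R)_I)=0$ for all sets $R$ of $s$ reactions of $\mathcal{R}$ and all $I\in\mathcal{O}_d(\mathcal{N})$; (iii) for all $I\in\mathcal{O}_d(\mathcal{N})$ and every set of $s$ reactions $y^1\to y'^1,\dots,y^s\to y'^s$ of the projected network $\mathcal{N}_I$, if the vectors $y^1-y'^1,\dots,y^s-y'^s$ are linearly independent, then $y^1,\dots,y^s$ are linearly dependent. If any of these holds, then $\mathcal{N}$ is not injective and every steady state (for every rate vector) is degenerate.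
   Context: A chemical reaction network $\mathcal{N}=(\mathcal{S},\mathcal{C},\mathcal{R})$ consists of a finite set of species $\mathcal{S}=\{S_1,\dots,S_n\}$, a finite set of complexes $\mathcal{C}\subset\mathbb{Z}_{\ge 0}^n$ (species $S_i$ identified with the $i$-th standard basis vector; zero complex allowed), and a finite set of reactions $\mathcal{R}\subset\mathcal{C}\times\mathcal{C}$, written $y\to y'$, with $y\ne y'$. A rate vector is $\kappa=(k_{y\to y'})\in\mathbb{R}_+^{\mathcal{R}}$ ($\mathbb{R}_+$ the positive reals); the mass-action species formation rate function is $f_\kappa(c)=\sum_{y\to y'\in\mathcal{R}}k_{y\to y'}c^y(y'-y)$, $c^y=\prod_i c_i^{y_i}$, with Jacobian $J_c(f_\kappa)$ at $c$. A steady state is $c\in\mathbb{R}^n$ with $f_\kappa(c)=0$; it is degenerate if $\ker(J_c(f_\kappa))\cap\Gamma\ne\{0\}$. The stoichiometric subspace is $\Gamma=\mathrm{span}\{y'-y:y\to y'\in\mathcal{R}\}$, $s=\dim\Gamma$, $d=n-s$. The network is injective if for every rate vector $\kappa$ and all distinct $a,b\in\mathbb{R}^n_+$ with $a-b\in\Gamma$, $f_\kappa(a)\ne f_\kappa(b)$. Let $\mathcal{O}(\mathcal{N})=\{i: S_i\to 0\notin\mathcal{R}\}$ and $\mathcal{O}_d(\mathcal{N})$ the set of its subsets of cardinality $d$. For a set $R$ of $s$ reactions $y^i\to y'^i$, $\mathcal{Y}(R)$ (resp. $\Gamma(R)$) is the $n\times s$ matrix with $i$-th column $y^i$ (resp.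 $y^i-y'^i$), and for $I\in\mathcal{O}_d(\mathcal{N})$, $M_I$ denotes the $s\times s$ matrix obtained from $M$ by deleting the rows with index in $I$. For $I\in\mathcal{O}_d(\mathcal{N})$, the projected network $\mathcal{N}_I$ has species $\{S_i: i\notin I\}$ and reactions $\pi_I(y)\to\pi_I(y')$ for $y\to y'\in\mathcal{R}$, where $\pi_I:\mathbb{R}^n\to\mathbb{R}^s$ is the coordinate projection forgetting the coordinates in $I$; reactions with $\pi_I(y)=\pi_I(y')$ and duplicate reactions are discarded. *)

theory Defs
  imports "HOL-Analysis.Analysis"
begin

text \<open>Species are the elements of a finite, linearly ordered
  type 'n (the order is the labelling S_1,...,S_n).\<close>

type_synonym 'n complex = "nat ^ 'n"
type_synonym 'n reaction = "'n complex \<times> 'n complex"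

definition rvec :: "'n complex \<Rightarrow> real ^ 'n" where
  "rvec y = (\<chi> i. real (y $ i))"

definition crn :: "'n::finite reaction set \<Rightarrow> bool" where
  "crn R \<longleftrightarrow> finite R \<and> (\<forall>r\<in>R. fst r \<noteq> snd r)"

definition cmonom :: "real ^ 'n::finite \<Rightarrow> 'n complex \<Rightarrow> real" where
  "cmonom c y = (\<Prod>i\<in>UNIV. (c $ i) ^ (y $ i))"

definition formation_rate ::
  "'n::finite reaction set \<Rightarrow> ('n reaction \<Rightarrow> real) \<Rightarrow> real ^ 'n \<Rightarrow> real ^ 'n" where
  "formation_rate R \<kappa> c = (\<Sum>r\<in>R. (\<kappa> r * cmonom c (fst r)) *\<^sub>R (rvec (snd r) - rvec (fst r)))"

definition rate_vector :: "'n::finite reaction set \<Rightarrow> ('n reaction \<Rightarrow> real) \<Rightarrow> bool" where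
  "rate_vector R \<kappa> \<longleftrightarrow> (\<forall>r\<in>R. \<kappa> r > 0)"

definition positive_vec :: "real ^ 'n::finite \<Rightarrow> bool" where
  "positive_vec c \<longleftrightarrow> (\<forall>i. c $ i > 0)"

definition jacobian :: "(real ^ 'n::finite \<Rightarrow> real ^ 'n) \<Rightarrow> real ^ 'n \<Rightarrow> real ^ 'n ^ 'n" where
  "jacobian f c = matrix (frechet_derivative f (at c))"

definition stoich_subspace :: "'n::finite reaction set \<Rightarrow> (real ^ 'n) set" where
  "stoich_subspace R = span {rvec (snd r) - rvec (fst r) | r. r \<in> R}"

definition stoich_dim :: "'n::finite reaction set \<Rightarrow> nat" where
  "stoich_dim R = dim (stoich_subspace R)"

definition codim :: "'n::finite reaction set \<Rightarrow> nat" where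
  "codim R = CARD('n) - stoich_dim R"

definition degenerate_at :: "'n::finite reaction set \<Rightarrow> ('n reaction \<Rightarrow> real) \<Rightarrow> real ^ 'n \<Rightarrow> bool" where
  "degenerate_at R \<kappa> c \<longleftrightarrow>
     {v. jacobian (formation_rate R \<kappa>) c *v v = 0} \<inter> stoich_subspace R \<noteq> {0}"

definition injective_crn :: "'n::finite reaction set \<Rightarrow> bool" where
  "injective_crn R \<longleftrightarrow> (\<forall>\<kappa>. rate_vector R \<kappa> \<longrightarrow>
     (\<forall>a b. positive_vec a \<and> positive_vec b \<and> a \<noteq> b \<and> a - b \<in> stoich_subspace R
        \<longrightarrow> formation_rate R \<kappa> a \<noteq> formation_rate R \<kappa> b))"

definition no_outflow :: "'n::finite reaction set \<Rightarrow> 'n set" where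
  "no_outflow R = {i. (axis i 1, 0) \<notin> R}"

definition no_outflow_d :: "'n::finite reaction set \<Rightarrow> 'n set set" where
  "no_outflow_d R = {I. I \<subseteq> no_outflow R \<and> card I = codim R}"

definition detm :: "nat \<Rightarrow> (nat \<Rightarrow> nat \<Rightarrow> real) \<Rightarrow> real" where
  "detm m M = (\<Sum>p\<in>{p. p permutes {..<m}}. of_int (sign p) * (\<Prod>i<m. M i (p i)))"

definition kept_rows :: "'n::{finite,linorder} set \<Rightarrow> 'n list" where
  "kept_rows I = sorted_list_of_set (UNIV - I)"

definition Ymat_del :: "'n::{finite,linorder} reaction list \<Rightarrow> 'n set \<Rightarrow> nat \<Rightarrow> nat \<Rightarrow> real" where
  "Ymat_del rs I i j = real (fst (rs ! j) $ (kept_rows I ! i))"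

definition Gmat_del :: "'n::{finite,linorder} reaction list \<Rightarrow> 'n set \<Rightarrow> nat \<Rightarrow> nat \<Rightarrow> real" where
  "Gmat_del rs I i j = real (fst (rs ! j) $ (kept_rows I ! i)) - real (snd (rs ! j) $ (kept_rows I ! i))"

text \<open>Projection pi_I, realised by setting the coordinates in I to zero (an isomorphic copy of
  R^(S \ I) inside R^n).\<close>
definition proj_complex :: "'n::finite set \<Rightarrow> 'n complex \<Rightarrow> 'n complex" where
  "proj_complex I y = (\<chi> i. if i \<in> I then 0 else y $ i)"

definition projected_reactions :: "'n::finite reaction set \<Rightarrow> 'n set \<Rightarrow> 'n reaction set" where
  "projected_reactions R I =
     {(proj_complex I (fst r), proj_complex I (snd r)) | r. r \<in> R \<and>
        proj_complex I (fst r) \<noteq> proj_complex I (snd r)}"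

definition lin_indep_fam :: "'a::real_vector list \<Rightarrow> bool" where
  "lin_indep_fam vs \<longleftrightarrow> distinct vs \<and> independent (set vs)"

end

theory Submission
  imports Defs "Jordan_Normal_Form.Determinant"
begin

text \<open>At concentrations with nonzero coordinates the Jacobian of the species formation rate is
  the sum of rank-one maps v \<mapsto> (\<kappa>_r c^(y_r) \<Sigma>_k y_rk v_k / c_k) (y'_r - y_r). Completed by a map
  with kernel \<Gamma>, its determinant detects degeneracy, and Cauchy--Binet expansions of that
  determinant over reactions and over species show that it can be nonzero only if some s
  reactions and some s species give nonzero minors det Y(R)_I and det \<Gamma>(R)_I; an outflow
  reaction S_i \<rightarrow> 0 would put e_i into \<Gamma> and so forbids i \<in> I. Conversely, letting the weights
  \<kappa>_r c^(y_r) and 1/c_k tend to 0 off a nonzero pair of minors leaves a nonsingular limit, and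
  nonsingularity persists for small positive weights. The projected network expresses the same
  minors on the coordinates outside I.\<close>

no_notation Matrix.vec_index (infixl "$" 100) and Matrix.scalar_prod (infix "\<bullet>" 70)

section \<open>Determinants of matrices given by their entries\<close>

lemma detm_eq_det: "detm s M = Determinant.det (Matrix.mat s s (\<lambda>(i,j). M i j))"
  unfolding detm_def Determinant.det_def by (simp add: atLeast0LessThan)

lemma detm_cong: "(\<And>i j. i < s \<Longrightarrow> j < s \<Longrightarrow> M i j = N i j) \<Longrightarrow> detm s M = detm s N"
  unfolding detm_def
  by (intro sum.cong refl arg_cong2[where f="(*)"] prod.cong) (auto dest: permutes_in_image)

lemma detm_transpose: "detm s (\<lambda>i j. M j i) = detm s M"
proof -
  have "Matrix.mat s s (\<lambda>(i,j). M j i) = transpose_mat (Matrix.mat s s (\<lambda>(i,j). M i j))"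
    by (rule eq_matI) auto
  thus ?thesis unfolding detm_eq_det by (simp add: det_transpose[of _ s])
qed

lemma detm_mult: "detm s (\<lambda>i k. \<Sum>j<s. P i j * Q j k) = detm s P * detm s Q"
proof -
  have "Matrix.mat s s (\<lambda>(i,k). \<Sum>j<s. P i j * Q j k) =
        Matrix.mat s s (\<lambda>(i,j). P i j) * Matrix.mat s s (\<lambda>(i,j). Q i j)"
    by (rule eq_matI) (auto simp: scalar_prod_def atLeast0LessThan intro!: sum.cong)
  thus ?thesis by (simp add: detm_eq_det det_mult[of _ s])
qed

lemma detm_neq_0_iff:
  "detm s M \<noteq> 0 \<longleftrightarrow> (\<forall>a. (\<forall>i<s. (\<Sum>j<s. M i j * a j) = 0) \<longrightarrow> (\<forall>j<s. a j = 0))"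
proof -
  let ?A = "Matrix.mat s s (\<lambda>(i,j). M i j)"
  have "detm s M = 0 \<longleftrightarrow> (\<exists>v. v \<in> carrier_vec s \<and> v \<noteq> 0\<^sub>v s \<and> ?A *\<^sub>v v = 0\<^sub>v s)"
    unfolding detm_eq_det by (rule det_0_iff_vec_prod_zero) simp
  also have "\<dots> \<longleftrightarrow> (\<exists>a. (\<forall>i<s. (\<Sum>j<s. M i j * a j) = 0) \<and> \<not> (\<forall>j<s. a j = 0))"
  proof
    assume "\<exists>v. v \<in> carrier_vec s \<and> v \<noteq> 0\<^sub>v s \<and> ?A *\<^sub>v v = 0\<^sub>v s"
    then obtain v where v: "v \<in> carrier_vec s" "v \<noteq> 0\<^sub>v s" "?A *\<^sub>v v = 0\<^sub>v s" by blast
    have "(\<Sum>j<s. M i j * vec_index v j) = 0" if "i < s" for i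
      using arg_cong[OF v(3), of "\<lambda>w. vec_index w i"] that v(1)
      by (simp add: scalar_prod_def atLeast0LessThan)
    moreover have "\<not> (\<forall>j<s. vec_index v j = 0)"
      using v(1,2) by (auto intro: eq_vecI)
    ultimately show "\<exists>a. (\<forall>i<s. (\<Sum>j<s. M i j * a j) = 0) \<and> \<not> (\<forall>j<s. a j = 0)" by blast
  next
    assume "\<exists>a. (\<forall>i<s. (\<Sum>j<s. M i j * a j) = 0) \<and> \<not> (\<forall>j<s. a j = 0)"
    then obtain a where a: "\<forall>i<s. (\<Sum>j<s. M i j * a j) = 0" "\<not> (\<forall>j<s. a j = 0)" by blast
    have "Matrix.vec s a \<noteq> 0\<^sub>v s"
      using a(2) by (metis index_vec index_zero_vec(1))
    moreover have "?A *\<^sub>v Matrix.vec s a = 0\<^sub>v s"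
      using a(1) by (intro eq_vecI) (auto simp: scalar_prod_def atLeast0LessThan)
    ultimately show "\<exists>v. v \<in> carrier_vec s \<and> v \<noteq> 0\<^sub>v s \<and> ?A *\<^sub>v v = 0\<^sub>v s"
      by (intro exI[of _ "Matrix.vec s a"]) simp
  qed
  finally show ?thesis by blast
qed

lemma detm_neq_0_iff_rows:
  "detm s M \<noteq> 0 \<longleftrightarrow> (\<forall>b. (\<forall>j<s. (\<Sum>i<s. b i * M i j) = 0) \<longrightarrow> (\<forall>i<s. b i = 0))"
  using detm_neq_0_iff[of s "\<lambda>i j. M j i"] detm_transpose[of s M] by (simp add: mult.commute)

definition index_maps :: "nat \<Rightarrow> nat \<Rightarrow> (nat \<Rightarrow> nat) set" where
  "index_maps s m = {f. (\<forall>i<s. f i < m) \<and> (\<forall>i\<ge>s. f i = i)}"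

definition binet_term :: "(nat \<Rightarrow> nat \<Rightarrow> real) \<Rightarrow> (nat \<Rightarrow> nat \<Rightarrow> real) \<Rightarrow> nat \<Rightarrow> (nat \<Rightarrow> nat) \<Rightarrow> real"
  where "binet_term A B s f = (\<Prod>i<s. A i (f i)) * detm s (\<lambda>i k. B (f i) k)"

lemma finite_index_maps: "finite (index_maps s m)"
  unfolding index_maps_def by (rule finite_subset[OF _ finite_bounded_functions[of "{..<m}" "{..<s}"]]) auto

lemma index_maps_comp_permutes:
  "f \<in> index_maps s m \<Longrightarrow> g permutes {..<s} \<Longrightarrow> f \<circ> g \<in> index_maps s m"
  unfolding index_maps_def using permutes_in_image[of g "{..<s}"] permutes_not_in[of g "{..<s}"]
  by auto

lemma detm_mult_expand:
  "detm s (\<lambda>i k. \<Sum>j<m. A i j * B j k) = (\<Sum>f\<in>index_maps s m. binet_term A B s f)"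
proof -
  define Am where "Am = Matrix.mat s m (\<lambda>(i,j). A i j)"
  define Bm where "Bm = Matrix.mat m s (\<lambda>(i,j). B i j)"
  have Am: "Am \<in> carrier_mat s m" and Bm: "Bm \<in> carrier_mat m s"
    unfolding Am_def Bm_def by auto
  have "Matrix.mat s s (\<lambda>(i,k). \<Sum>j<m. A i j * B j k) = Am * Bm"
    by (rule eq_matI) (auto simp: Am_def Bm_def scalar_prod_def atLeast0LessThan intro!: sum.cong)
  hence "detm s (\<lambda>i k. \<Sum>j<m. A i j * B j k) = Determinant.det (Am * Bm)"
    by (simp add: detm_eq_det)
  also have "\<dots> = (\<Sum>f\<in>index_maps s m.
      Determinant.det (mat\<^sub>r s s (\<lambda>i. Am $$ (i, f i) \<cdot>\<^sub>v row Bm (f i))))"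
  proof -
    have "index_maps s m = {f. (\<forall>i\<in>{0..<s}. f i \<in> {0..<m}) \<and> (\<forall>i. i \<notin> {0..<s} \<longrightarrow> f i = i)}"
      by (auto simp: index_maps_def)
    thus ?thesis unfolding mat_mul_finsum_alt[OF Am Bm]
      by (simp only:) (rule det_linear_rows_sum, use Bm in auto)
  qed
  also have "\<dots> = (\<Sum>f\<in>index_maps s m. binet_term A B s f)"
  proof (rule sum.cong[OF refl])
    fix f assume f: "f \<in> index_maps s m"
    have "Determinant.det (mat\<^sub>r s s (\<lambda>i. Am $$ (i, f i) \<cdot>\<^sub>v row Bm (f i)))
       = prod (\<lambda>i. Am $$ (i, f i)) {0..<s} * Determinant.det (mat\<^sub>r s s (\<lambda>i. row Bm (f i)))"
      by (rule det_rows_mul) (use Bm in auto)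
    also have "prod (\<lambda>i. Am $$ (i, f i)) {0..<s} = (\<Prod>i<s. A i (f i))"
      using f by (auto simp: index_maps_def Am_def atLeast0LessThan intro!: prod.cong)
    also have "mat\<^sub>r s s (\<lambda>i. row Bm (f i)) = Matrix.mat s s (\<lambda>(i,k). B (f i) k)"
      using f by (intro eq_matI) (auto simp: index_maps_def Bm_def)
    finally show "Determinant.det (mat\<^sub>r s s (\<lambda>i. Am $$ (i, f i) \<cdot>\<^sub>v row Bm (f i))) = binet_term A B s f"
      by (simp add: binet_term_def detm_eq_det)
  qed
  finally show ?thesis .
qed

lemma binet_term_not_inj:
  assumes "\<not> inj_on f {..<s}"
  shows "binet_term A B s f = 0"
proof -
  from assms obtain i j where ij: "i < s" "j < s" "i \<noteq> j" "f i = f j"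
    unfolding inj_on_def by auto
  have "Determinant.det (Matrix.mat s s (\<lambda>(i,k). B (f i) k)) = 0"
    by (rule det_identical_rows[OF _ ij(3) ij(1) ij(2)]) (use ij in \<open>auto intro!: eq_vecI\<close>)
  thus ?thesis by (simp add: binet_term_def detm_eq_det)
qed

lemma sum_binet_term_permutes:
  assumes f: "f \<in> index_maps s m" and inj: "inj_on f {..<s}"
  shows "(\<Sum>g | g permutes {..<s}. binet_term A B s (f \<circ> g)) =
     detm s (\<lambda>i k. A i (f k)) * detm s (\<lambda>i k. B (f i) k)"
proof -
  have "detm s (\<lambda>i k. A i (f k)) * detm s (\<lambda>i k. B (f i) k) =
        (\<Sum>g\<in>index_maps s s. binet_term A B s (f \<circ> g))"
    unfolding detm_mult[symmetric] detm_mult_expand by (simp add: binet_term_def)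
  also have "\<dots> = (\<Sum>g | g permutes {..<s}. binet_term A B s (f \<circ> g))"
  proof (rule sum.mono_neutral_right[OF finite_index_maps])
    show "{g. g permutes {..<s}} \<subseteq> index_maps s s"
      using index_maps_comp_permutes[of id s s] by (auto simp: index_maps_def)
    show "\<forall>g\<in>index_maps s s - {g. g permutes {..<s}}. binet_term A B s (f \<circ> g) = 0"
    proof
      fix g assume g: "g \<in> index_maps s s - {g. g permutes {..<s}}"
      have "\<not> inj_on g {..<s}"
      proof
        assume "inj_on g {..<s}"
        hence "g permutes {..<s}"
          by (rule inj_on_nat_permutes) (use g in \<open>auto simp: index_maps_def\<close>)
        with g show False by auto
      qed
      hence "\<not> inj_on (f \<circ> g) {..<s}" using inj_on_imageI2 by blast
      thus "binet_term A B s (f \<circ> g) = 0" by (rule binet_term_not_inj)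
    qed
  qed
  finally show ?thesis ..
qed

text \<open>Averaging the expansion of det(AB) over all reorderings f \<circ> g of the column choices f
  groups it into the Cauchy--Binet sum of products of complementary minors.\<close>
lemma cauchy_binet_nonzero_minors:
  fixes A B :: "nat \<Rightarrow> nat \<Rightarrow> real"
  assumes "detm s (\<lambda>i k. \<Sum>j<m. A i j * B j k) \<noteq> 0"
  shows "\<exists>f. (\<forall>i<s. f i < m) \<and> inj_on f {..<s} \<and>
             detm s (\<lambda>i k. A i (f k)) \<noteq> 0 \<and> detm s (\<lambda>i k. B (f i) k) \<noteq> 0"
proof (rule ccontr)
  assume none: "\<not> ?thesis"
  let ?P = "{g. g permutes {..<s}}"
  let ?h = "binet_term A B s"
  have zero: "(\<Sum>g\<in>?P. ?h (f \<circ> g)) = 0" if f: "f \<in> index_maps s m" for f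
  proof (cases "inj_on f {..<s}")
    case True
    with f none show ?thesis
      by (auto simp: sum_binet_term_permutes index_maps_def)
  next
    case False
    have "\<not> inj_on (f \<circ> g) {..<s}" if "g \<in> ?P" for g
      using False permutes_image[of g "{..<s}"] that
      by (auto simp: comp_inj_on_iff[symmetric] dest: inj_on_imageI)
    thus ?thesis by (auto intro!: sum.neutral binet_term_not_inj)
  qed
  have reindex: "(\<Sum>f\<in>index_maps s m. ?h (f \<circ> g)) = (\<Sum>f\<in>index_maps s m. ?h f)"
    if g: "g \<in> ?P" for g
  proof (rule sum.reindex_bij_witness[where i="\<lambda>f. f \<circ> Hilbert_Choice.inv g" and j="\<lambda>f. f \<circ> g"])
    have gp: "g permutes {..<s}" using g by simp
    fix f assume f: "f \<in> index_maps s m"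
    show "f \<circ> g \<circ> Hilbert_Choice.inv g = f" "f \<circ> Hilbert_Choice.inv g \<circ> g = f"
      using permutes_inverses[OF gp] by (auto simp: fun_eq_iff)
    show "f \<circ> g \<in> index_maps s m" "f \<circ> Hilbert_Choice.inv g \<in> index_maps s m"
      using f gp permutes_inv[OF gp] by (auto intro: index_maps_comp_permutes)
  qed simp
  have "of_nat (card ?P) * (\<Sum>f\<in>index_maps s m. ?h f) = (\<Sum>g\<in>?P. \<Sum>f\<in>index_maps s m. ?h (f \<circ> g))"
    using reindex by simp
  also have "\<dots> = (\<Sum>f\<in>index_maps s m. \<Sum>g\<in>?P. ?h (f \<circ> g))" by (rule sum.swap)
  also have "\<dots> = 0" using zero by simp
  finally have "(\<Sum>f\<in>index_maps s m. ?h f) = 0"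
    using card_permutations[of "{..<s}" s] by simp
  with assms detm_mult_expand show False by simp
qed

section \<open>Indexed families of vectors\<close>

lemma sum_set_conv_sum_nth: "distinct xs \<Longrightarrow> sum f (set xs) = (\<Sum>i<length xs. f (xs ! i))"
  by (rule sum.reindex_bij_betw[OF bij_betw_nth, symmetric]) auto

definition indep_fam :: "(nat \<Rightarrow> real ^ 'n) \<Rightarrow> nat \<Rightarrow> bool" where
  "indep_fam w s \<longleftrightarrow> (\<forall>a. (\<Sum>j<s. a j *\<^sub>R w j) = 0 \<longrightarrow> (\<forall>j<s. a j = 0))"

definition indep_fam_on :: "'n set \<Rightarrow> (nat \<Rightarrow> real ^ 'n) \<Rightarrow> nat \<Rightarrow> bool" where
  "indep_fam_on K w s \<longleftrightarrow> (\<forall>a. (\<forall>k\<in>K. (\<Sum>j<s. a j * w j $ k) = 0) \<longrightarrow> (\<forall>j<s. a j = 0))"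

lemma indep_famD: "indep_fam w s \<Longrightarrow> (\<Sum>j<s. a j *\<^sub>R w j) = 0 \<Longrightarrow> j < s \<Longrightarrow> a j = 0"
  unfolding indep_fam_def by blast

lemma indep_fam_onD:
  "indep_fam_on K w s \<Longrightarrow> (\<And>k. k \<in> K \<Longrightarrow> (\<Sum>j<s. a j * w j $ k) = 0) \<Longrightarrow> j < s \<Longrightarrow> a j = 0"
  unfolding indep_fam_on_def by blast

lemma indep_fam_on_imp_indep_fam:
  assumes "indep_fam_on K w s" shows "indep_fam w s"
  unfolding indep_fam_def
proof (intro allI impI)
  fix a j assume z: "(\<Sum>j<s. a j *\<^sub>R w j) = 0" and "j < s"
  have "(\<Sum>j<s. a j * w j $ k) = 0" for k
    using arg_cong[OF z, of "\<lambda>v. v $ k"] by simp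
  thus "a j = 0" by (rule indep_fam_onD[OF assms _ \<open>j < s\<close>])
qed

lemma indep_fam_on_iff_indep_fam:
  assumes "\<And>j k. j < s \<Longrightarrow> k \<notin> K \<Longrightarrow> w j $ k = 0"
  shows "indep_fam_on K w s \<longleftrightarrow> indep_fam w s"
proof
  assume "indep_fam w s"
  show "indep_fam_on K w s"
    unfolding indep_fam_on_def
  proof (intro allI impI)
    fix a j assume on_K: "\<forall>k\<in>K. (\<Sum>j<s. a j * w j $ k) = 0" and "j < s"
    have "(\<Sum>j<s. a j * w j $ k) = 0" for k
    proof (cases "k \<in> K")
      case False
      thus ?thesis using assms by simp
    qed (use on_K in simp)
    hence "(\<Sum>j<s. a j *\<^sub>R w j) = 0"
      unfolding Finite_Cartesian_Product.vec_eq_iff by simp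
    with \<open>indep_fam w s\<close> \<open>j < s\<close> show "a j = 0" by (blast dest: indep_famD)
  qed
qed (rule indep_fam_on_imp_indep_fam)

lemma indep_fam_on_cong:
  assumes "\<And>j k. j < s \<Longrightarrow> k \<in> K \<Longrightarrow> w j $ k = w' j $ k"
  shows "indep_fam_on K w s \<longleftrightarrow> indep_fam_on K w' s"
proof -
  have "k \<in> K \<Longrightarrow> (\<Sum>j<s. a j * w j $ k) = (\<Sum>j<s. a j * w' j $ k)" for a k
    using assms by (intro sum.cong) auto
  thus ?thesis unfolding indep_fam_on_def by simp
qed

lemma indep_fam_on_uminus: "indep_fam_on K (\<lambda>j. - w j) s \<longleftrightarrow> indep_fam_on K w s"
proof -
  have "(\<Sum>j<s. a j * (- w j) $ k) = - (\<Sum>j<s. a j * w j $ k)" for a k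
    by (simp add: sum_negf)
  thus ?thesis unfolding indep_fam_on_def by simp
qed

lemma indep_fam_on_unscale:
  assumes "indep_fam_on K (\<lambda>j. \<chi> k. p j * q k * w j $ k) s" and "\<And>j. j < s \<Longrightarrow> p j \<noteq> 0"
  shows "indep_fam_on K w s"
  unfolding indep_fam_on_def
proof (intro allI impI)
  fix a i assume a: "\<forall>k\<in>K. (\<Sum>j<s. a j * w j $ k) = 0" and "i < s"
  have "(\<Sum>j<s. a j / p j * (\<chi> k. p j * q k * w j $ k) $ k) = 0" if "k \<in> K" for k
  proof -
    have "(\<Sum>j<s. a j / p j * (\<chi> k. p j * q k * w j $ k) $ k) = q k * (\<Sum>j<s. a j * w j $ k)"
      using assms(2) by (auto simp: sum_distrib_left intro!: sum.cong)
    thus ?thesis using a that by simp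
  qed
  hence "a i / p i = 0"
    using indep_fam_onD[OF assms(1) _ \<open>i < s\<close>, where a="\<lambda>j. a j / p j"] by blast
  with assms(2) \<open>i < s\<close> show "a i = 0" by simp
qed

lemma indep_fam_inj: "indep_fam w s \<Longrightarrow> inj_on w {..<s}"
proof (rule inj_onI, rule ccontr)
  fix i j assume fam: "indep_fam w s" and ij: "i \<in> {..<s}" "j \<in> {..<s}" "w i = w j" "i \<noteq> j"
  define a where "a k = (if k = i then 1 else if k = j then -1 else (0::real))" for k
  have "(\<Sum>k<s. a k *\<^sub>R w k) = (\<Sum>k\<in>{i,j}. a k *\<^sub>R w k)"
    by (rule sum.mono_neutral_right) (use ij in \<open>auto simp: a_def\<close>)
  also have "\<dots> = 0" using ij by (simp add: a_def)
  finally have "a i = 0" using fam ij(1) by (auto dest: indep_famD)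
  thus False by (simp add: a_def)
qed

lemma indep_fam_independent:
  assumes fam: "indep_fam w s" shows "independent (w ` {..<s})"
  unfolding independent_explicit
proof (intro conjI allI impI ballI)
  show "finite (w ` {..<s})" by simp
  fix c v assume z: "(\<Sum>v\<in>w ` {..<s}. c v *\<^sub>R v) = 0" and v: "v \<in> w ` {..<s}"
  have "(\<Sum>j<s. c (w j) *\<^sub>R w j) = 0"
    using z sum.reindex[OF indep_fam_inj[OF fam], of "\<lambda>v. c v *\<^sub>R v"] by simp
  thus "c v = 0" using v fam by (auto dest: indep_famD)
qed

lemma indep_fam_span:
  assumes fam: "indep_fam w s" and "\<And>j. j < s \<Longrightarrow> w j \<in> V" and "dim V \<le> s" and "v \<in> V"
  shows "\<exists>a. v = (\<Sum>j<s. a j *\<^sub>R w j)"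
proof -
  have "V \<subseteq> span (w ` {..<s})"
    by (rule card_ge_dim_independent)
       (use assms indep_fam_independent[OF fam] card_image[OF indep_fam_inj[OF fam]] in auto)
  with assms(4) obtain u where "v = (\<Sum>x\<in>w ` {..<s}. u x *\<^sub>R x)"
    unfolding span_finite[OF finite_imageI[OF finite_lessThan]] by auto
  also have "\<dots> = (\<Sum>j<s. u (w j) *\<^sub>R w j)"
    by (rule sum.reindex[OF indep_fam_inj[OF fam], unfolded comp_def])
  finally show ?thesis by (rule exI[where x="\<lambda>j. u (w j)"])
qed

lemma indep_fam_nth:
  assumes "distinct xs" and "independent (set xs)"
  shows "indep_fam (\<lambda>j. xs ! j) (length xs)"
  unfolding indep_fam_def
proof (intro allI impI)
  fix a j assume z: "(\<Sum>j<length xs. a j *\<^sub>R xs ! j) = 0" and j: "j < length xs"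
  have bij: "bij_betw ((!) xs) {..<length xs} (set xs)" by (rule bij_betw_nth[OF assms(1)]) auto
  define c where "c v = a (inv_into {..<length xs} ((!) xs) v)" for v
  have c: "c (xs ! i) = a i" if "i < length xs" for i
    using bij_betw_inv_into_left[OF bij] that by (simp add: c_def)
  have "(\<Sum>v\<in>set xs. c v *\<^sub>R v) = (\<Sum>i<length xs. c (xs ! i) *\<^sub>R xs ! i)"
    by (rule sum.reindex_bij_betw[OF bij, symmetric])
  also have "\<dots> = 0" using z by (simp add: c)
  finally have "c (xs ! j) = 0" using assms(2) j unfolding independent_explicit by auto
  thus "a j = 0" using c[OF j] by simp
qed

lemma lin_indep_fam_iff_indep_fam: "lin_indep_fam (map h xs) \<longleftrightarrow> indep_fam (\<lambda>j. h (xs ! j)) (length xs)"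
proof
  assume "lin_indep_fam (map h xs)"
  hence "indep_fam (\<lambda>j. map h xs ! j) (length xs)"
    using indep_fam_nth[of "map h xs"] unfolding lin_indep_fam_def by simp
  moreover have "(\<Sum>j<length xs. a j *\<^sub>R map h xs ! j) = (\<Sum>j<length xs. a j *\<^sub>R h (xs ! j))" for a
    by (rule sum.cong) auto
  ultimately show "indep_fam (\<lambda>j. h (xs ! j)) (length xs)"
    unfolding indep_fam_def by simp
next
  assume fam: "indep_fam (\<lambda>j. h (xs ! j)) (length xs)"
  have "distinct (map h xs)"
    using indep_fam_inj[OF fam] unfolding distinct_conv_nth by (auto simp: inj_on_def)
  moreover have "set (map h xs) = (\<lambda>j. h (xs ! j)) ` {..<length xs}"
    by (auto simp: in_set_conv_nth image_iff) (use nth_mem in blast)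
  ultimately show "lin_indep_fam (map h xs)"
    unfolding lin_indep_fam_def using indep_fam_independent[OF fam] by simp
qed

lemma exists_basis_fam:
  fixes G :: "(real ^ 'n) set"
  obtains \<phi> where "indep_fam \<phi> (dim G)" and "\<And>i. i < dim G \<Longrightarrow> \<phi> i \<in> G"
proof -
  obtain B where B: "B \<subseteq> G" "independent B" "card B = dim G" by (rule basis_exists)
  obtain xs where xs: "set xs = B" "distinct xs"
    using finite_distinct_list[OF independent_imp_finite[OF B(2)]] by blast
  have "length xs = dim G" using distinct_card[OF xs(2)] xs(1) B(3) by simp
  with that indep_fam_nth[OF xs(2)] xs B show ?thesis by (metis nth_mem subsetD)
qed

lemma indep_fam_on_vanish:
  assumes fam: "indep_fam_on K w s" and "\<And>j. j < s \<Longrightarrow> w j \<in> V" and "dim V \<le> s"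
    and "v \<in> V" and "\<And>k. k \<in> K \<Longrightarrow> v $ k = 0"
  shows "v = 0"
proof -
  obtain a where a: "v = (\<Sum>j<s. a j *\<^sub>R w j)"
    using indep_fam_span[OF indep_fam_on_imp_indep_fam[OF fam]] assms(2-4) by blast
  have "a j = 0" if "j < s" for j
    by (rule indep_fam_onD[OF fam _ that]) (use assms(5) a in auto)
  thus ?thesis unfolding a by simp
qed

lemma detm_neq_0_iff_indep_fam_on:
  assumes "distinct ks" "set ks = K" "length ks = s"
  shows "detm s (\<lambda>i j. w j $ (ks ! i)) \<noteq> 0 \<longleftrightarrow> indep_fam_on K w s"
proof -
  have "(\<forall>i<s. (\<Sum>j<s. w j $ (ks ! i) * a j) = 0) \<longleftrightarrow> (\<forall>k\<in>K. (\<Sum>j<s. a j * w j $ k) = 0)" for a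
    using assms nth_mem by (fastforce simp: in_set_conv_nth mult.commute)
  thus ?thesis unfolding detm_neq_0_iff indep_fam_on_def by simp
qed

lemma indep_fam_on_rows:
  assumes fam: "indep_fam_on K w s" and "card K = s"
    and "\<And>j. j < s \<Longrightarrow> (\<Sum>k\<in>K. b k * w j $ k) = 0" and "k \<in> K"
  shows "b k = 0"
proof -
  obtain ks where ks: "set ks = K" "distinct ks"
    using finite_distinct_list[of K] by auto
  have len: "length ks = s" using distinct_card[OF ks(2)] ks(1) assms(2) by simp
  have rows: "(\<Sum>i<s. b (ks ! i) * w j $ (ks ! i)) = 0" if "j < s" for j
    using sum.reindex_bij_betw[OF bij_betw_nth[OF ks(2) refl refl], of "\<lambda>k. b k * w j $ k"]
      assms(3)[OF that] ks(1) len by (simp add: lessThan_atLeast0)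
  have all: "\<forall>b. (\<forall>j<s. (\<Sum>i<s. b i * w j $ (ks ! i)) = 0) \<longrightarrow> (\<forall>i<s. b i = 0)"
    using fam detm_neq_0_iff_indep_fam_on[OF ks(2,1) len, of w]
    unfolding detm_neq_0_iff_rows by simp
  have "\<forall>i<s. b (ks ! i) = 0"
    using spec[OF all, of "\<lambda>i. b (ks ! i)"] rows by simp
  thus ?thesis using assms(4) ks(1) len by (auto simp: in_set_conv_nth)
qed

section \<open>Sums of rank-one maps\<close>

definition dyad_sum :: "'a set \<Rightarrow> ('a \<Rightarrow> real ^ 'n) \<Rightarrow> ('a \<Rightarrow> real ^ 'n) \<Rightarrow> real ^ 'n \<Rightarrow> real ^ 'n"
  where "dyad_sum A x g v = (\<Sum>a\<in>A. (x a \<bullet> v) *\<^sub>R g a)"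

lemma linear_dyad_sum: "linear (dyad_sum A x g)"
  by (rule linearI)
     (simp_all add: dyad_sum_def inner_add_right scaleR_add_left sum.distrib scaleR_sum_right)

lemma matrix_vector_mul_linear:
  fixes f :: "real ^ 'n \<Rightarrow> real ^ 'm"
  assumes "linear f" shows "matrix f *v x = f x"
  using fun_cong[OF matrix_vector_mul(2)[OF assms]] by simp

lemma dyad_sum_in_subspace:
  "subspace G \<Longrightarrow> (\<And>a. a \<in> A \<Longrightarrow> g a \<in> G) \<Longrightarrow> dyad_sum A x g v \<in> G"
  unfolding dyad_sum_def by (intro subspace_sum subspace_scale) auto

lemma perp_sum_eq_0_iff:
  fixes G :: "(real ^ 'n) set"
  assumes G: "subspace G" and B: "finite B" "B \<subseteq> G\<^sup>\<bottom>" "G\<^sup>\<bottom> \<subseteq> span B"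
  shows "(\<Sum>w\<in>B. (w \<bullet> v) *\<^sub>R w) = 0 \<longleftrightarrow> v \<in> G"
proof
  assume P0: "(\<Sum>w\<in>B. (w \<bullet> v) *\<^sub>R w) = 0"
  have "v \<bullet> (\<Sum>w\<in>B. (w \<bullet> v) *\<^sub>R w) = (\<Sum>w\<in>B. (w \<bullet> v)\<^sup>2)"
    by (simp add: inner_sum_right power2_eq_square inner_commute)
  hence "(\<Sum>w\<in>B. (w \<bullet> v)\<^sup>2) = 0" using P0 by simp
  hence "w \<bullet> v = 0" if "w \<in> B" for w
    using sum_nonneg_eq_0_iff[OF B(1), of "\<lambda>w. (w \<bullet> v)\<^sup>2"] that by simp
  hence "real_inner_class.orthogonal v u" if "u \<in> G\<^sup>\<bottom>" for u
    using B(3) that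
    by (intro orthogonal_to_span[of u B v]) (auto simp: real_inner_class.orthogonal_def inner_commute)
  hence "v \<in> G\<^sup>\<bottom>\<^sup>\<bottom>"
    by (auto simp: orthogonal_comp_def real_inner_class.orthogonal_def inner_commute)
  thus "v \<in> G" using orthogonal_comp_self[OF G] by simp
next
  assume "v \<in> G"
  hence "w \<bullet> v = 0" if "w \<in> B" for w
    using B(2) that by (auto simp: orthogonal_comp_def real_inner_class.orthogonal_def inner_commute)
  thus "(\<Sum>w\<in>B. (w \<bullet> v) *\<^sub>R w) = 0" by simp
qed

text \<open>The added map vanishes exactly on G and takes values in the orthogonal complement of G,
  so the kernel of the sum is the kernel of L inside G.\<close>
lemma det_add_perp_eq_0_iff:
  fixes L :: "real ^ 'n \<Rightarrow> real ^ 'n"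
  assumes G: "subspace G" and B: "finite B" "B \<subseteq> G\<^sup>\<bottom>" "G\<^sup>\<bottom> \<subseteq> span B"
    and L: "linear L" "\<And>v. L v \<in> G"
  shows "Determinants.det (matrix (\<lambda>v. L v + (\<Sum>w\<in>B. (w \<bullet> v) *\<^sub>R w))) = 0 \<longleftrightarrow> (\<exists>v\<in>G. v \<noteq> 0 \<and> L v = 0)"
proof -
  let ?P = "\<lambda>v. \<Sum>w\<in>B. (w \<bullet> v) *\<^sub>R w"
  have "linear ?P"
    by (rule linearI) (simp_all add: inner_add_right scaleR_add_left sum.distrib scaleR_sum_right)
  hence lin: "linear (\<lambda>v. L v + ?P v)" using L(1) by (rule linear_compose_add[rotated])
  have P_perp: "?P v \<in> G\<^sup>\<bottom>" for v
    using B(2) by (intro subspace_sum subspace_scale subspace_orthogonal_comp) auto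
  have kernel: "L v + ?P v = 0 \<longleftrightarrow> v \<in> G \<and> L v = 0" for v
  proof
    assume sum0: "L v + ?P v = 0"
    hence "L v = - ?P v" by (simp add: eq_neg_iff_add_eq_0)
    hence "L v \<in> G\<^sup>\<bottom>"
      using subspace_neg[OF subspace_orthogonal_comp P_perp] by simp
    hence "L v = 0" using orthogonal_Int_0[OF G] L(2) by blast
    with sum0 perp_sum_eq_0_iff[OF G B] show "v \<in> G \<and> L v = 0" by simp
  qed (use perp_sum_eq_0_iff[OF G B] in simp)
  have "Determinants.det (matrix (\<lambda>v. L v + ?P v)) = 0 \<longleftrightarrow> \<not> inj (\<lambda>v. L v + ?P v)"
    using det_nz_iff_inj[OF lin] by blast
  also have "\<dots> \<longleftrightarrow> (\<exists>v. v \<noteq> 0 \<and> L v + ?P v = 0)"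
    using linear_injective_0[OF lin] by auto
  finally show ?thesis using kernel by blast
qed

lemma tendsto_det:
  fixes M :: "'a \<Rightarrow> real ^ 'n ^ 'n"
  assumes "\<And>i j. ((\<lambda>t. M t $ i $ j) \<longlongrightarrow> M0 $ i $ j) F"
  shows "((\<lambda>t. Determinants.det (M t)) \<longlongrightarrow> Determinants.det M0) F"
  unfolding Determinants.det_def by (intro tendsto_intros assms)

lemma eventually_inj_on_dyad_sum:
  fixes x :: "'b \<Rightarrow> 'a \<Rightarrow> real ^ 'n"
  assumes G: "subspace G" and A: "finite A" "\<And>a. a \<in> A \<Longrightarrow> g a \<in> G"
    and inj: "\<And>v. v \<in> G \<Longrightarrow> dyad_sum A x0 g v = 0 \<Longrightarrow> v = 0"
    and lim: "\<And>a. a \<in> A \<Longrightarrow> ((\<lambda>t. x t a) \<longlongrightarrow> x0 a) F"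
  shows "eventually (\<lambda>t. \<forall>v\<in>G. dyad_sum A (x t) g v = 0 \<longrightarrow> v = 0) F"
proof -
  obtain B where B: "B \<subseteq> G\<^sup>\<bottom>" "independent B" "G\<^sup>\<bottom> \<subseteq> span B"
    by (rule basis_exists[of "G\<^sup>\<bottom>"])
  have fin: "finite B" using B(2) independent_imp_finite by blast
  define N where "N y = matrix (\<lambda>v. dyad_sum A y g v + (\<Sum>w\<in>B. (w \<bullet> v) *\<^sub>R w))" for y
  have "Determinants.det (N y) = 0 \<longleftrightarrow> (\<exists>v\<in>G. v \<noteq> 0 \<and> dyad_sum A y g v = 0)" for y
    unfolding N_def
    by (rule det_add_perp_eq_0_iff[OF G fin B(1,3) linear_dyad_sum dyad_sum_in_subspace[OF G A(2)]])
  hence det_N: "Determinants.det (N y) \<noteq> 0 \<longleftrightarrow> (\<forall>v\<in>G. dyad_sum A y g v = 0 \<longrightarrow> v = 0)" for y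
    by auto
  have "((\<lambda>t. N (x t) $ i $ j) \<longlongrightarrow> N x0 $ i $ j) F" for i j
    unfolding N_def matrix_def dyad_sum_def
    by (simp, intro tendsto_add tendsto_const tendsto_sum tendsto_mult tendsto_inner lim)
  hence "((\<lambda>t. Determinants.det (N (x t))) \<longlongrightarrow> Determinants.det (N x0)) F"
    by (rule tendsto_det)
  moreover have "Determinants.det (N x0) \<noteq> 0" using det_N inj by blast
  ultimately have "eventually (\<lambda>t. Determinants.det (N (x t)) \<noteq> 0) F"
    by (rule tendsto_imp_eventually_ne)
  thus ?thesis by (rule eventually_mono) (simp add: det_N)
qed

lemma detm_compression_neq_0:
  assumes G: "subspace G" "dim G \<le> s"
    and \<phi>: "indep_fam \<phi> s" "\<And>i. i < s \<Longrightarrow> \<phi> i \<in> G"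
    and L: "linear L" "\<And>v. v \<in> G \<Longrightarrow> L v \<in> G" "\<And>v. v \<in> G \<Longrightarrow> L v = 0 \<Longrightarrow> v = 0"
  shows "detm s (\<lambda>i i'. \<phi> i \<bullet> L (\<phi> i')) \<noteq> 0"
  unfolding detm_neq_0_iff
proof (intro allI impI)
  fix a j assume H: "\<forall>i<s. (\<Sum>i'<s. \<phi> i \<bullet> L (\<phi> i') * a i') = 0" and "j < s"
  define w where "w = (\<Sum>i'<s. a i' *\<^sub>R \<phi> i')"
  have wG: "w \<in> G" unfolding w_def using \<phi>(2) by (intro subspace_sum subspace_scale G(1)) auto
  have orth: "\<phi> i \<bullet> L w = 0" if "i < s" for i
    using H that
    by (simp add: w_def linear_sum[OF L(1)] linear_cmul[OF L(1)] inner_sum_right mult.commute)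
  obtain b where b: "L w = (\<Sum>i<s. b i *\<^sub>R \<phi> i)"
    using indep_fam_span[OF \<phi>(1) \<phi>(2) G(2) L(2)[OF wG]] by blast
  have "L w \<bullet> L w = (\<Sum>i<s. b i * (\<phi> i \<bullet> L w))"
    by (subst (1) b) (simp add: inner_sum_left)
  also have "\<dots> = 0" using orth by simp
  finally have "w = 0" using L(3)[OF wG] by simp
  thus "a j = 0" using \<phi>(1) \<open>j < s\<close> unfolding w_def by (blast dest: indep_famD)
qed

lemma exists_coords_nonzero_minor:
  fixes w \<phi> :: "nat \<Rightarrow> real ^ 'n"
  assumes "detm s (\<lambda>j i. w j \<bullet> \<phi> i) \<noteq> 0"
  shows "\<exists>K. card K = s \<and> indep_fam_on K w s \<and> indep_fam_on K \<phi> s"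
proof -
  obtain ks :: "'n list" where ks: "set ks = UNIV" "distinct ks"
    using finite_distinct_list[of "UNIV :: 'n set"] by auto
  have "w j \<bullet> \<phi> i = (\<Sum>k<length ks. w j $ (ks ! k) * \<phi> i $ (ks ! k))" for j i
    using sum.reindex_bij_betw[OF bij_betw_nth[OF ks(2) refl refl], of "\<lambda>k. w j $ k * \<phi> i $ k"]
    by (simp add: inner_vec_def ks(1) lessThan_atLeast0)
  with assms have "detm s (\<lambda>j i. \<Sum>k<length ks. w j $ (ks ! k) * \<phi> i $ (ks ! k)) \<noteq> 0"
    by simp
  from cauchy_binet_nonzero_minors[OF this] obtain e where e: "\<forall>i<s. e i < length ks"
      "inj_on e {..<s}" "detm s (\<lambda>j i. w j $ (ks ! e i)) \<noteq> 0" "detm s (\<lambda>i' i. \<phi> i $ (ks ! e i')) \<noteq> 0"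
    by blast
  define ks' where "ks' = map (\<lambda>i. ks ! e i) [0..<s]"
  have ks': "distinct ks'" "length ks' = s"
    using e(1,2) ks(2) by (auto simp: ks'_def distinct_map inj_on_def nth_eq_iff_index_eq)
  have "detm s (\<lambda>i j. w j $ (ks' ! i)) \<noteq> 0" "detm s (\<lambda>i j. \<phi> j $ (ks' ! i)) \<noteq> 0"
    using e(3,4) detm_transpose[of s "\<lambda>i j. w j $ (ks' ! i)"]
    by (auto simp: ks'_def cong: detm_cong)
  hence "indep_fam_on (set ks') w s" "indep_fam_on (set ks') \<phi> s"
    using detm_neq_0_iff_indep_fam_on[OF ks'(1) refl ks'(2)] by auto
  moreover have "card (set ks') = s" using distinct_card[OF ks'(1)] ks'(2) by simp
  ultimately show ?thesis by blast
qed

lemma exists_dyad_terms_nonzero_minor: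
  fixes g x :: "'a \<Rightarrow> real ^ 'n"
  assumes G: "subspace G" "dim G = s" and A: "finite A" "\<And>a. a \<in> A \<Longrightarrow> g a \<in> G"
    and \<phi>: "indep_fam \<phi> s" "\<And>i. i < s \<Longrightarrow> \<phi> i \<in> G"
    and inj: "\<And>v. v \<in> G \<Longrightarrow> dyad_sum A x g v = 0 \<Longrightarrow> v = 0"
  shows "\<exists>rs. distinct rs \<and> set rs \<subseteq> A \<and> length rs = s \<and>
              indep_fam (\<lambda>j. g (rs ! j)) s \<and> detm s (\<lambda>j i. x (rs ! j) \<bullet> \<phi> i) \<noteq> 0"
proof -
  obtain as where as: "set as = A" "distinct as" using finite_distinct_list[OF A(1)] by blast
  have "detm s (\<lambda>i i'. \<phi> i \<bullet> dyad_sum A x g (\<phi> i')) \<noteq> 0"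
    by (rule detm_compression_neq_0[OF G(1) _ \<phi> linear_dyad_sum])
       (use G(2) inj dyad_sum_in_subspace[OF G(1) A(2)] in auto)
  moreover have "\<phi> i \<bullet> dyad_sum A x g (\<phi> i') =
      (\<Sum>j<length as. (\<phi> i \<bullet> g (as ! j)) * (x (as ! j) \<bullet> \<phi> i'))" for i i'
    unfolding dyad_sum_def inner_sum_right as(1)[symmetric] sum_set_conv_sum_nth[OF as(2)]
    by (simp add: inner_commute mult.commute)
  ultimately have "detm s (\<lambda>i i'. \<Sum>j<length as. (\<phi> i \<bullet> g (as ! j)) * (x (as ! j) \<bullet> \<phi> i')) \<noteq> 0"
    by simp
  from cauchy_binet_nonzero_minors[OF this] obtain f where f: "\<forall>i<s. f i < length as"
      "inj_on f {..<s}" "detm s (\<lambda>i k. \<phi> i \<bullet> g (as ! f k)) \<noteq> 0"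
      "detm s (\<lambda>j i. x (as ! f j) \<bullet> \<phi> i) \<noteq> 0"
    by blast
  define rs where "rs = map (\<lambda>j. as ! f j) [0..<s]"
  have rs: "length rs = s" "\<And>j. j < s \<Longrightarrow> rs ! j = as ! f j" by (simp_all add: rs_def)
  have "distinct rs"
    using f(1,2) as(2) by (auto simp: rs_def distinct_map inj_on_def nth_eq_iff_index_eq)
  moreover have "set rs \<subseteq> A" using f(1) as(1) by (auto simp: rs_def)
  moreover have "indep_fam (\<lambda>j. g (rs ! j)) s"
    unfolding indep_fam_def
  proof (intro allI impI)
    fix a j assume z: "(\<Sum>k<s. a k *\<^sub>R g (rs ! k)) = 0" and "j < s"
    have "(\<Sum>k<s. (\<phi> i \<bullet> g (as ! f k)) * a k) = \<phi> i \<bullet> (\<Sum>k<s. a k *\<^sub>R g (rs ! k))" for i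
      by (simp add: inner_sum_right rs(2) mult.commute)
    thus "a j = 0" using f(3) \<open>j < s\<close> z unfolding detm_neq_0_iff by simp
  qed
  moreover have "detm s (\<lambda>j i. x (rs ! j) \<bullet> \<phi> i) \<noteq> 0"
    using f(4) by (simp add: rs(2) cong: detm_cong)
  ultimately show ?thesis using rs(1) by blast
qed

lemma exists_dyad_terms_indep_fam_on:
  fixes g x :: "'a \<Rightarrow> real ^ 'n"
  assumes G: "subspace G" "dim G = s" and A: "finite A" "\<And>a. a \<in> A \<Longrightarrow> g a \<in> G"
    and inj: "\<And>v. v \<in> G \<Longrightarrow> dyad_sum A x g v = 0 \<Longrightarrow> v = 0"
  shows "\<exists>rs K. distinct rs \<and> set rs \<subseteq> A \<and> length rs = s \<and> card K = s \<and>
                indep_fam_on K (\<lambda>j. g (rs ! j)) s \<and> indep_fam_on K (\<lambda>j. x (rs ! j)) s"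
proof -
  obtain \<phi> where \<phi>: "indep_fam \<phi> s" "\<And>i. i < s \<Longrightarrow> \<phi> i \<in> G"
    using exists_basis_fam[of G] G(2) by blast
  obtain rs where rs: "distinct rs" "set rs \<subseteq> A" "length rs = s"
      "indep_fam (\<lambda>j. g (rs ! j)) s" "detm s (\<lambda>j i. x (rs ! j) \<bullet> \<phi> i) \<noteq> 0"
    using exists_dyad_terms_nonzero_minor[where g=g and x=x and \<phi>=\<phi>, OF G A \<phi> inj] by blast
  obtain K where K: "card K = s" "indep_fam_on K (\<lambda>j. x (rs ! j)) s" "indep_fam_on K \<phi> s"
    using exists_coords_nonzero_minor[OF rs(5)] by blast
  have "indep_fam_on K (\<lambda>j. g (rs ! j)) s"
    unfolding indep_fam_on_def
  proof (intro allI impI)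
    fix a j assume H: "\<forall>k\<in>K. (\<Sum>j<s. a j * g (rs ! j) $ k) = 0" and "j < s"
    define w where "w = (\<Sum>j<s. a j *\<^sub>R g (rs ! j))"
    have wG: "w \<in> G" unfolding w_def using rs(2,3) nth_mem
      by (intro subspace_sum subspace_scale G(1) A(2)) blast
    have "w = 0"
      by (rule indep_fam_on_vanish[OF K(3) \<phi>(2) _ wG]) (use G(2) H in \<open>simp_all add: w_def\<close>)
    thus "a j = 0" using rs(4) \<open>j < s\<close> unfolding w_def by (blast dest: indep_famD)
  qed
  with rs K show ?thesis by blast
qed

section \<open>Mass-action kinetics\<close>

abbreviation reaction_vec :: "'n::finite reaction \<Rightarrow> real ^ 'n" where
  "reaction_vec r \<equiv> rvec (snd r) - rvec (fst r)"

lemma reaction_vec_in_stoich_subspace: "r \<in> R \<Longrightarrow> reaction_vec r \<in> stoich_subspace R"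
  unfolding stoich_subspace_def by (rule span_base) blast

lemma subspace_stoich_subspace: "subspace (stoich_subspace R)"
  unfolding stoich_subspace_def by (rule subspace_span)

lemma cmonom_pos: "positive_vec c \<Longrightarrow> cmonom c y > 0"
  unfolding cmonom_def positive_vec_def by (intro prod_pos) auto

lemma cmonom_nonzero: "(\<And>k. c $ k \<noteq> 0) \<Longrightarrow> cmonom c y \<noteq> 0"
  unfolding cmonom_def by (simp add: prod_zero_iff)

definition monom_grad :: "real ^ 'n::finite \<Rightarrow> 'n complex \<Rightarrow> real ^ 'n" where
  "monom_grad c y = (\<chi> i. real (y $ i) * c $ i ^ (y $ i - 1) * (\<Prod>j\<in>UNIV - {i}. c $ j ^ y $ j))"

lemma has_derivative_cmonom: "((\<lambda>c. cmonom c y) has_derivative (\<lambda>h. monom_grad c y \<bullet> h)) (at c)"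
proof -
  have "((\<lambda>c. \<Prod>i\<in>UNIV. c $ i ^ y $ i) has_derivative
     (\<lambda>h. \<Sum>i\<in>UNIV. (of_nat (y $ i) * h $ i * c $ i ^ (y $ i - 1)) * (\<Prod>j\<in>UNIV - {i}. c $ j ^ y $ j))) (at c)"
    by (intro has_derivative_prod has_derivative_power bounded_linear_imp_has_derivative
        bounded_linear_vec_nth)
  moreover have "(\<lambda>h. \<Sum>i\<in>UNIV. (of_nat (y $ i) * h $ i * c $ i ^ (y $ i - 1)) *
      (\<Prod>j\<in>UNIV - {i}. c $ j ^ y $ j)) = (\<lambda>h. monom_grad c y \<bullet> h)"
    by (auto simp: monom_grad_def inner_vec_def mult_ac intro!: sum.cong)
  ultimately show ?thesis unfolding cmonom_def by simp
qed

lemma monom_grad_nonzero_coords: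
  assumes c: "\<And>k. c $ k \<noteq> 0"
  shows "monom_grad c y = (\<chi> k. cmonom c y * (1 / c $ k) * rvec y $ k)"
proof -
  have "real (y $ i) * c $ i ^ (y $ i - 1) * (\<Prod>j\<in>UNIV - {i}. c $ j ^ y $ j) =
        cmonom c y * (1 / c $ i) * real (y $ i)" for i
  proof (cases "y $ i")
    case (Suc m)
    have "cmonom c y = c $ i ^ y $ i * (\<Prod>j\<in>UNIV - {i}. c $ j ^ y $ j)"
      unfolding cmonom_def by (rule prod.remove) auto
    thus ?thesis using Suc c[of i] by (simp add: field_simps)
  qed simp
  thus ?thesis by (simp add: monom_grad_def rvec_def Finite_Cartesian_Product.vec_eq_iff)
qed

lemma has_derivative_formation_rate:
  "(formation_rate R \<kappa> has_derivative dyad_sum R (\<lambda>r. \<kappa> r *\<^sub>R monom_grad c (fst r)) reaction_vec) (at c)"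
proof -
  have "((\<lambda>c. \<Sum>r\<in>R. (\<kappa> r * cmonom c (fst r)) *\<^sub>R reaction_vec r) has_derivative
          (\<lambda>h. \<Sum>r\<in>R. (\<kappa> r * (monom_grad c (fst r) \<bullet> h)) *\<^sub>R reaction_vec r)) (at c)"
    by (intro has_derivative_sum has_derivative_scaleR_left has_derivative_mult_right
        has_derivative_cmonom)
  thus ?thesis unfolding formation_rate_def dyad_sum_def[abs_def] by simp
qed

lemma jacobian_formation_rate:
  "jacobian (formation_rate R \<kappa>) c *v v = dyad_sum R (\<lambda>r. \<kappa> r *\<^sub>R monom_grad c (fst r)) reaction_vec v"
  unfolding jacobian_def frechet_derivative_at[OF has_derivative_formation_rate, symmetric]
  by (rule matrix_vector_mul_linear[OF linear_dyad_sum])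

lemma degenerate_at_iff:
  "degenerate_at R \<kappa> c \<longleftrightarrow>
     \<not> (\<forall>v\<in>stoich_subspace R. dyad_sum R (\<lambda>r. \<kappa> r *\<^sub>R monom_grad c (fst r)) reaction_vec v = 0 \<longrightarrow> v = 0)"
  unfolding degenerate_at_def jacobian_formation_rate
  using subspace_0[OF subspace_stoich_subspace] linear_0[OF linear_dyad_sum] by auto

text \<open>At positive concentrations the Jacobian depends only on the weights l r = \<kappa> r c^(y r) and
  u k = 1 / c k, and all positive weights arise.\<close>
lemma realize_weights:
  assumes l: "\<And>r. r \<in> R \<Longrightarrow> l r > 0" and u: "\<And>k. u k > 0"
  obtains \<kappa> c where "rate_vector R \<kappa>" "positive_vec c"
    "\<And>r. \<kappa> r *\<^sub>R monom_grad c (fst r) = l r *\<^sub>R (\<chi> k. u k * rvec (fst r) $ k)"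
proof
  define c :: "real ^ 'a" where "c = (\<chi> k. 1 / u k)"
  show pos: "positive_vec c" using u by (simp add: positive_vec_def c_def)
  show "rate_vector R (\<lambda>r. l r / cmonom c (fst r))"
    using l cmonom_pos[OF pos] by (simp add: rate_vector_def)
  fix r
  have "c $ k \<noteq> 0" for k using pos unfolding positive_vec_def by (metis order_less_irrefl)
  thus "(l r / cmonom c (fst r)) *\<^sub>R monom_grad c (fst r) = l r *\<^sub>R (\<chi> k. u k * rvec (fst r) $ k)"
    using cmonom_pos[OF pos, of "fst r"]
    by (simp add: monom_grad_nonzero_coords Finite_Cartesian_Product.vec_eq_iff c_def)
qed

section \<open>Nondegeneracy and nonvanishing minors\<close>

text \<open>Weights t on the reactions outside rs and on the species outside K; as t tends to 0 only
  the minor selected by rs and K survives.\<close>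
definition selection_weights :: "'n::finite reaction list \<Rightarrow> 'n set \<Rightarrow> real \<Rightarrow> 'n reaction \<Rightarrow> real ^ 'n"
  where "selection_weights rs K t r =
    (if r \<in> set rs then 1 else t) *\<^sub>R (\<chi> k. (if k \<in> K then 1 else t) * rvec (fst r) $ k)"

lemma tendsto_selection_weights:
  "((\<lambda>t. selection_weights rs K t r) \<longlongrightarrow> selection_weights rs K 0 r) (at_right 0)"
proof -
  have weight: "((\<lambda>t. if P then 1 else t) \<longlongrightarrow> (if P then 1 else 0)) (at_right (0::real))" for P
    by (cases P) (simp_all add: tendsto_ident_at)
  show ?thesis unfolding selection_weights_def by (intro tendsto_intros weight)
qed

lemma inj_on_dyad_sum_selection_weights:
  fixes R :: "'n::finite reaction set"
  defines "s \<equiv> stoich_dim R"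
  assumes R: "finite R" and rs: "distinct rs" "set rs \<subseteq> R" "length rs = s" and K: "card K = s"
    and Y: "indep_fam_on K (\<lambda>j. rvec (fst (rs ! j))) s"
    and \<Gamma>: "indep_fam_on K (\<lambda>j. reaction_vec (rs ! j)) s"
    and v: "v \<in> stoich_subspace R" "dyad_sum R (selection_weights rs K 0) reaction_vec v = 0"
  shows "v = 0"
proof -
  define X where "X r = (\<Sum>k\<in>K. rvec (fst r) $ k * v $ k)" for r :: "'n reaction"
  have "selection_weights rs K 0 r \<bullet> v = (if r \<in> set rs then X r else 0)" for r
  proof -
    have "(\<chi> k. (if k \<in> K then 1 else 0) * rvec (fst r) $ k) \<bullet> v = X r"
      unfolding X_def inner_vec_def by (simp, rule sum.mono_neutral_cong_right) auto
    thus ?thesis by (simp add: selection_weights_def)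
  qed
  hence "dyad_sum R (selection_weights rs K 0) reaction_vec v = (\<Sum>r\<in>set rs. X r *\<^sub>R reaction_vec r)"
    unfolding dyad_sum_def using rs(2)
    by (simp add: if_distrib[of "\<lambda>x. x *\<^sub>R _"] cong: if_cong)
       (rule sum.mono_neutral_cong_right[OF R rs(2)], auto)
  also have "\<dots> = (\<Sum>j<s. X (rs ! j) *\<^sub>R reaction_vec (rs ! j))"
    by (simp add: sum_set_conv_sum_nth[OF rs(1)] rs(3))
  finally have sum0: "(\<Sum>j<s. X (rs ! j) *\<^sub>R reaction_vec (rs ! j)) = 0" using v(2) by simp
  have "X (rs ! j) = 0" if "j < s" for j
    by (rule indep_famD[OF indep_fam_on_imp_indep_fam[OF \<Gamma>] sum0 that])
  hence vK: "v $ k = 0" if "k \<in> K" for k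
    using indep_fam_on_rows[OF Y K _ that, where b="\<lambda>k. v $ k"] by (simp add: X_def mult.commute)
  have "reaction_vec (rs ! j) \<in> stoich_subspace R" if "j < s" for j
    using rs(2,3) that nth_mem reaction_vec_in_stoich_subspace by blast
  from indep_fam_on_vanish[OF \<Gamma> this _ v(1) vK] show "v = 0"
    by (simp add: s_def stoich_dim_def)
qed

lemma exists_nondegenerate_if_indep_fam_on:
  fixes R :: "'n::finite reaction set"
  defines "s \<equiv> stoich_dim R"
  assumes R: "finite R" and rs: "distinct rs" "set rs \<subseteq> R" "length rs = s" and K: "card K = s"
    and Y: "indep_fam_on K (\<lambda>j. rvec (fst (rs ! j))) s"
    and \<Gamma>: "indep_fam_on K (\<lambda>j. reaction_vec (rs ! j)) s"
  shows "\<exists>\<kappa> c. rate_vector R \<kappa> \<and> positive_vec c \<and> \<not> degenerate_at R \<kappa> c"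
proof -
  let ?G = "stoich_subspace R"
  have "v = 0" if "v \<in> ?G" "dyad_sum R (selection_weights rs K 0) reaction_vec v = 0" for v
    by (rule inj_on_dyad_sum_selection_weights[OF R rs[unfolded s_def] K[unfolded s_def]
          Y[unfolded s_def] \<Gamma>[unfolded s_def] that])
  from eventually_inj_on_dyad_sum[OF subspace_stoich_subspace R reaction_vec_in_stoich_subspace this
      tendsto_selection_weights]
  have "\<forall>\<^sub>F t in at_right 0. \<forall>v\<in>?G. dyad_sum R (selection_weights rs K t) reaction_vec v = 0 \<longrightarrow> v = 0" .
  moreover have "\<forall>\<^sub>F t in at_right 0. t \<in> {0<..<1::real}"
    using eventually_at_right_real[of 0 1] by simp
  ultimately have "\<forall>\<^sub>F t in at_right 0.
      (\<forall>v\<in>?G. dyad_sum R (selection_weights rs K t) reaction_vec v = 0 \<longrightarrow> v = 0) \<and> t \<in> {0<..<1}"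
    by (rule eventually_conj)
  from eventually_happens'[OF trivial_limit_at_right_real this] obtain t where t: "0 < t"
    and inj: "\<forall>v\<in>?G. dyad_sum R (selection_weights rs K t) reaction_vec v = 0 \<longrightarrow> v = 0"
    by auto
  obtain \<kappa> c where \<kappa>c: "rate_vector R \<kappa>" "positive_vec c" "\<And>r. \<kappa> r *\<^sub>R monom_grad c (fst r) =
      (if r \<in> set rs then 1 else t) *\<^sub>R (\<chi> k. (if k \<in> K then 1 else t) * rvec (fst r) $ k)"
    by (rule realize_weights[of R "\<lambda>r. if r \<in> set rs then 1 else t" "\<lambda>k. if k \<in> K then 1 else t"])
       (use t in auto)
  have "(\<lambda>r. \<kappa> r *\<^sub>R monom_grad c (fst r)) = selection_weights rs K t"
    using \<kappa>c(3) by (simp add: selection_weights_def fun_eq_iff)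
  hence "\<not> degenerate_at R \<kappa> c" using inj unfolding degenerate_at_iff by simp
  with \<kappa>c(1,2) show ?thesis by blast
qed

lemma exists_nondegenerate_nonzero_coords:
  fixes R :: "'n::finite reaction set"
  assumes R: "finite R" and nd: "\<not> degenerate_at R \<kappa> c"
  shows "\<exists>c'. (\<forall>k. c' $ k \<noteq> 0) \<and> \<not> degenerate_at R \<kappa> c'"
proof -
  let ?G = "stoich_subspace R"
  let ?c = "\<lambda>t. c + (\<chi> k. t)"
  have "((\<lambda>t. \<kappa> r *\<^sub>R monom_grad (?c t) (fst r)) \<longlongrightarrow> \<kappa> r *\<^sub>R monom_grad (?c 0) (fst r)) (at_right 0)"
    for r unfolding monom_grad_def by (intro tendsto_intros)
  moreover have "?c 0 = c" by (simp add: Finite_Cartesian_Product.vec_eq_iff)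
  ultimately have lim: "((\<lambda>t. \<kappa> r *\<^sub>R monom_grad (?c t) (fst r)) \<longlongrightarrow> \<kappa> r *\<^sub>R monom_grad c (fst r)) (at_right 0)"
    for r by simp
  have "v = 0" if "v \<in> ?G" "dyad_sum R (\<lambda>r. \<kappa> r *\<^sub>R monom_grad c (fst r)) reaction_vec v = 0" for v
    using nd that unfolding degenerate_at_iff by blast
  from eventually_inj_on_dyad_sum[OF subspace_stoich_subspace R reaction_vec_in_stoich_subspace this lim]
  have "\<forall>\<^sub>F t in at_right 0. \<forall>v\<in>?G.
      dyad_sum R (\<lambda>r. \<kappa> r *\<^sub>R monom_grad (?c t) (fst r)) reaction_vec v = 0 \<longrightarrow> v = 0" .
  moreover have "\<forall>\<^sub>F t in at_right 0. \<forall>k. ?c t $ k \<noteq> 0"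
  proof (rule eventually_all_finite)
    fix k
    show "\<forall>\<^sub>F t in at_right 0. ?c t $ k \<noteq> 0"
    proof (cases "c $ k = 0")
      case True
      show ?thesis using eventually_at_right_less[of "0::real"] by eventually_elim (simp add: True)
    next
      case False
      have "((\<lambda>t. c $ k + t) \<longlongrightarrow> c $ k + 0) (at_right 0)" by (intro tendsto_intros)
      from tendsto_imp_eventually_ne[OF this, of 0] False show ?thesis by simp
    qed
  qed
  ultimately have "\<forall>\<^sub>F t in at_right 0. (\<forall>v\<in>?G.
      dyad_sum R (\<lambda>r. \<kappa> r *\<^sub>R monom_grad (?c t) (fst r)) reaction_vec v = 0 \<longrightarrow> v = 0) \<and>
      (\<forall>k. ?c t $ k \<noteq> 0)"
    by (rule eventually_conj)
  from eventually_happens'[OF trivial_limit_at_right_real this] obtain t where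
    "\<forall>v\<in>?G. dyad_sum R (\<lambda>r. \<kappa> r *\<^sub>R monom_grad (?c t) (fst r)) reaction_vec v = 0 \<longrightarrow> v = 0"
    "\<forall>k. ?c t $ k \<noteq> 0"
    by blast
  thus ?thesis unfolding degenerate_at_iff by (intro exI[of _ "?c t"]) simp
qed

lemma exists_indep_fam_on_if_nondegenerate:
  fixes R :: "'n::finite reaction set"
  defines "s \<equiv> stoich_dim R"
  assumes R: "finite R" and \<kappa>: "rate_vector R \<kappa>" and nd: "\<not> degenerate_at R \<kappa> c"
  shows "\<exists>rs K. distinct rs \<and> set rs \<subseteq> R \<and> length rs = s \<and> card K = s \<and>
     indep_fam_on K (\<lambda>j. rvec (fst (rs ! j))) s \<and> indep_fam_on K (\<lambda>j. reaction_vec (rs ! j)) s"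
proof -
  obtain c' where c': "\<And>k. c' $ k \<noteq> 0" "\<not> degenerate_at R \<kappa> c'"
    using exists_nondegenerate_nonzero_coords[OF R nd] by blast
  define x where "x r = \<kappa> r *\<^sub>R monom_grad c' (fst r)" for r
  have inj: "v = 0" if "v \<in> stoich_subspace R" "dyad_sum R x reaction_vec v = 0" for v
    using c'(2) that unfolding degenerate_at_iff x_def by blast
  have dim: "dim (stoich_subspace R) = s" by (simp add: s_def stoich_dim_def)
  obtain rs K where rs: "distinct rs" "set rs \<subseteq> R" "length rs = s" "card K = s"
      "indep_fam_on K (\<lambda>j. reaction_vec (rs ! j)) s" "indep_fam_on K (\<lambda>j. x (rs ! j)) s"
    using exists_dyad_terms_indep_fam_on[where g="\<lambda>r. reaction_vec r" and x=x,
        OF subspace_stoich_subspace dim R reaction_vec_in_stoich_subspace inj]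
    by blast
  let ?p = "\<lambda>j. \<kappa> (rs ! j) * cmonom c' (fst (rs ! j))"
  have "?p j \<noteq> 0" if "j < s" for j
  proof -
    have "rs ! j \<in> R" using rs(2,3) that nth_mem by blast
    hence "\<kappa> (rs ! j) > 0" using \<kappa> by (simp add: rate_vector_def)
    thus ?thesis using cmonom_nonzero[OF c'(1)] by simp
  qed
  moreover have "x (rs ! j) = (\<chi> k. ?p j * (1 / c' $ k) * rvec (fst (rs ! j)) $ k)" for j
    by (simp add: x_def monom_grad_nonzero_coords[OF c'(1)] Finite_Cartesian_Product.vec_eq_iff mult.assoc)
  hence "indep_fam_on K (\<lambda>j. \<chi> k. ?p j * (1 / c' $ k) * rvec (fst (rs ! j)) $ k) s"
    using rs(6) by simp
  ultimately have "indep_fam_on K (\<lambda>j. rvec (fst (rs ! j))) s"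
    using indep_fam_on_unscale[where p="?p" and q="\<lambda>k. 1 / c' $ k" and w="\<lambda>j. rvec (fst (rs ! j))"]
    by blast
  with rs show ?thesis by blast
qed

lemma no_outflow_if_indep_fam_on:
  fixes R :: "'n::finite reaction set"
  assumes rs: "set rs \<subseteq> R" "length rs = stoich_dim R"
    and \<Gamma>: "indep_fam_on K (\<lambda>j. reaction_vec (rs ! j)) (stoich_dim R)"
  shows "UNIV - K \<subseteq> no_outflow R"
proof
  fix i assume i: "i \<in> UNIV - K"
  show "i \<in> no_outflow R"
  proof (rule ccontr)
    assume "i \<notin> no_outflow R"
    hence "reaction_vec (axis i 1, 0) \<in> stoich_subspace R"
      by (intro reaction_vec_in_stoich_subspace) (simp add: no_outflow_def)
    moreover have "reaction_vec (axis i 1, 0) = - axis i (1::real)"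
      by (simp add: rvec_def axis_def Finite_Cartesian_Product.vec_eq_iff)
    ultimately have ax: "axis i (1::real) \<in> stoich_subspace R"
      using subspace_neg[OF subspace_stoich_subspace, of "- axis i 1"] by simp
    have "reaction_vec (rs ! j) \<in> stoich_subspace R" if "j < stoich_dim R" for j
      using rs(1) nth_mem[of j rs] rs(2) that by (intro reaction_vec_in_stoich_subspace) auto
    moreover have "dim (stoich_subspace R) \<le> stoich_dim R" by (simp add: stoich_dim_def)
    moreover have "axis i (1::real) $ k = 0" if "k \<in> K" for k
      using i that by (auto simp: axis_def)
    ultimately have "axis i (1::real) = 0" by (rule indep_fam_on_vanish[OF \<Gamma> _ _ ax])
    thus False by simp
  qed
qed

lemma card_UNIV_Diff_eq_stoich_dim_iff:
  fixes R :: "'n::finite reaction set" and I :: "'n set"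
  shows "card (UNIV - I) = stoich_dim R \<longleftrightarrow> card I = codim R"
proof -
  have "card (UNIV - I) = CARD('n) - card I" by (rule card_Diff_subset) auto
  moreover have "stoich_dim R \<le> CARD('n)" unfolding stoich_dim_def by (rule dim_subset_UNIV_cart)
  moreover have "card I \<le> CARD('n)" by (rule card_mono) auto
  ultimately show ?thesis unfolding codim_def by arith
qed

lemma
  fixes I :: "'n::{finite,linorder} set"
  shows distinct_kept_rows: "distinct (kept_rows I)"
    and set_kept_rows: "set (kept_rows I) = UNIV - I"
    and length_kept_rows: "length (kept_rows I) = card (UNIV - I)"
  unfolding kept_rows_def by simp_all

lemma detm_Ymat_del_neq_0_iff:
  fixes I :: "'n::{finite,linorder} set"
  assumes "card (UNIV - I) = s"
  shows "detm s (Ymat_del rs I) \<noteq> 0 \<longleftrightarrow> indep_fam_on (UNIV - I) (\<lambda>j. rvec (fst (rs ! j))) s"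
proof -
  have "Ymat_del rs I = (\<lambda>i j. rvec (fst (rs ! j)) $ (kept_rows I ! i))"
    by (simp add: Ymat_del_def rvec_def fun_eq_iff)
  moreover have "length (kept_rows I) = s" by (simp add: length_kept_rows assms)
  ultimately show ?thesis by (simp only:) (rule detm_neq_0_iff_indep_fam_on[OF distinct_kept_rows set_kept_rows])
qed

lemma detm_Gmat_del_neq_0_iff:
  fixes I :: "'n::{finite,linorder} set"
  assumes "card (UNIV - I) = s"
  shows "detm s (Gmat_del rs I) \<noteq> 0 \<longleftrightarrow>
    indep_fam_on (UNIV - I) (\<lambda>j. rvec (fst (rs ! j)) - rvec (snd (rs ! j))) s"
proof -
  have "Gmat_del rs I = (\<lambda>i j. (rvec (fst (rs ! j)) - rvec (snd (rs ! j))) $ (kept_rows I ! i))"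
    by (simp add: Gmat_del_def rvec_def fun_eq_iff)
  moreover have "length (kept_rows I) = s" by (simp add: length_kept_rows assms)
  ultimately show ?thesis by (simp only:) (rule detm_neq_0_iff_indep_fam_on[OF distinct_kept_rows set_kept_rows])
qed

lemma indep_fam_on_reactant_minus_product:
  "indep_fam_on K (\<lambda>j. rvec (fst (rs ! j)) - rvec (snd (rs ! j))) s \<longleftrightarrow>
   indep_fam_on K (\<lambda>j. reaction_vec (rs ! j)) s"
  using indep_fam_on_uminus[of K "\<lambda>j. reaction_vec (rs ! j)" s] by simp

lemma exists_nondegenerate_if_nonzero_minors:
  fixes R :: "'n::{finite,linorder} reaction set"
  defines "s \<equiv> stoich_dim R"
  assumes R: "crn R" and rs: "distinct rs" "set rs \<subseteq> R" "length rs = s"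
    and I: "I \<in> no_outflow_d R" and minors: "detm s (Ymat_del rs I) * detm s (Gmat_del rs I) \<noteq> 0"
  shows "\<exists>\<kappa> c. rate_vector R \<kappa> \<and> positive_vec c \<and> \<not> degenerate_at R \<kappa> c"
proof -
  have K: "card (UNIV - I) = s"
    using I card_UNIV_Diff_eq_stoich_dim_iff unfolding no_outflow_d_def s_def by blast
  have \<Gamma>: "indep_fam_on (UNIV - I) (\<lambda>j. reaction_vec (rs ! j)) s"
    using minors by (simp add: detm_Gmat_del_neq_0_iff[OF K] indep_fam_on_reactant_minus_product)
  have Y: "indep_fam_on (UNIV - I) (\<lambda>j. rvec (fst (rs ! j))) s"
    using minors detm_Ymat_del_neq_0_iff[OF K] by simp
  show ?thesis
    using exists_nondegenerate_if_indep_fam_on[OF _ rs[unfolded s_def] K[unfolded s_def]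
        Y[unfolded s_def] \<Gamma>[unfolded s_def]] R
    by (simp add: crn_def)
qed

lemma exists_nonzero_minors_if_nondegenerate:
  fixes R :: "'n::{finite,linorder} reaction set"
  defines "s \<equiv> stoich_dim R"
  assumes R: "crn R" and \<kappa>: "rate_vector R \<kappa>" and nd: "\<not> degenerate_at R \<kappa> c"
  shows "\<exists>rs I. distinct rs \<and> set rs \<subseteq> R \<and> length rs = s \<and> I \<in> no_outflow_d R \<and>
     detm s (Ymat_del rs I) * detm s (Gmat_del rs I) \<noteq> 0"
proof -
  have "finite R" using R by (simp add: crn_def)
  from exists_indep_fam_on_if_nondegenerate[OF this \<kappa> nd]
  obtain rs K where rs: "distinct rs" "set rs \<subseteq> R" "length rs = s" "card K = s"
      "indep_fam_on K (\<lambda>j. rvec (fst (rs ! j))) s" "indep_fam_on K (\<lambda>j. reaction_vec (rs ! j)) s"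
    unfolding s_def by blast
  define I where "I = UNIV - K"
  have K: "UNIV - I = K" by (auto simp: I_def)
  have "I \<in> no_outflow_d R"
    using no_outflow_if_indep_fam_on[OF rs(2) rs(3,6)[unfolded s_def]] rs(4)
      card_UNIV_Diff_eq_stoich_dim_iff[of I R]
    unfolding no_outflow_d_def I_def s_def by (simp add: Diff_Diff_Int)
  moreover have "card (UNIV - I) = s" using K rs(4) by simp
  hence "detm s (Ymat_del rs I) \<noteq> 0" "detm s (Gmat_del rs I) \<noteq> 0"
    using rs(5,6) by (simp_all add: detm_Ymat_del_neq_0_iff detm_Gmat_del_neq_0_iff K
                       indep_fam_on_reactant_minus_product)
  ultimately show ?thesis using rs(1-3) by auto
qed

section \<open>Projected networks\<close>

definition proj_reaction :: "'n::finite set \<Rightarrow> 'n reaction \<Rightarrow> 'n reaction" where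
  "proj_reaction I r = (proj_complex I (fst r), proj_complex I (snd r))"

lemma rvec_proj_complex: "rvec (proj_complex I y) $ k = (if k \<in> I then 0 else rvec y $ k)"
  by (simp add: rvec_def proj_complex_def)

lemma lin_indep_fam_map_proj_iff:
  assumes "\<And>r k. h (proj_reaction I r) $ k = (if k \<in> I then 0 else h r $ k)"
  shows "lin_indep_fam (map h (map (proj_reaction I) rs)) \<longleftrightarrow>
    indep_fam_on (UNIV - I) (\<lambda>j. h (rs ! j)) (length rs)"
proof -
  have "lin_indep_fam (map h (map (proj_reaction I) rs)) \<longleftrightarrow>
      indep_fam (\<lambda>j. h (proj_reaction I (rs ! j))) (length rs)"
    using lin_indep_fam_iff_indep_fam[of "h \<circ> proj_reaction I" rs] by simp
  also have "\<dots> \<longleftrightarrow> indep_fam_on (UNIV - I) (\<lambda>j. h (proj_reaction I (rs ! j))) (length rs)"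
    by (rule indep_fam_on_iff_indep_fam[symmetric]) (simp add: assms)
  also have "\<dots> \<longleftrightarrow> indep_fam_on (UNIV - I) (\<lambda>j. h (rs ! j)) (length rs)"
    by (rule indep_fam_on_cong) (simp add: assms)
  finally show ?thesis .
qed

lemma nonzero_minors_iff_lin_indep_fam_proj:
  fixes R :: "'n::{finite,linorder} reaction set"
  assumes I: "I \<in> no_outflow_d R" and len: "length rs = stoich_dim R"
  shows "detm (stoich_dim R) (Ymat_del rs I) * detm (stoich_dim R) (Gmat_del rs I) \<noteq> 0 \<longleftrightarrow>
    lin_indep_fam (map (\<lambda>r. rvec (fst r) - rvec (snd r)) (map (proj_reaction I) rs)) \<and>
    lin_indep_fam (map (\<lambda>r. rvec (fst r)) (map (proj_reaction I) rs))"
proof -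
  have K: "card (UNIV - I) = stoich_dim R"
    using I card_UNIV_Diff_eq_stoich_dim_iff unfolding no_outflow_d_def by blast
  have Y: "rvec (fst (proj_reaction I r)) $ k = (if k \<in> I then 0 else rvec (fst r) $ k)"
    and \<Gamma>: "(rvec (fst (proj_reaction I r)) - rvec (snd (proj_reaction I r))) $ k =
       (if k \<in> I then 0 else (rvec (fst r) - rvec (snd r)) $ k)" for r k
    by (simp_all add: proj_reaction_def rvec_proj_complex)
  show ?thesis
    using lin_indep_fam_map_proj_iff[where h="\<lambda>r. rvec (fst r)", OF Y, of rs]
      lin_indep_fam_map_proj_iff[where h="\<lambda>r. rvec (fst r) - rvec (snd r)", OF \<Gamma>, of rs] len
    by (auto simp: detm_Ymat_del_neq_0_iff[OF K] detm_Gmat_del_neq_0_iff[OF K])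
qed

lemma projected_reactions_lin_indep_fam:
  assumes indep: "lin_indep_fam (map (\<lambda>r. rvec (fst r) - rvec (snd r)) (map (proj_reaction I) rs))"
    and rs: "set rs \<subseteq> R"
  shows "distinct (map (proj_reaction I) rs)" "set (map (proj_reaction I) rs) \<subseteq> projected_reactions R I"
proof -
  let ?h = "\<lambda>r. rvec (fst r) - rvec (snd r)" and ?rs' = "map (proj_reaction I) rs"
  have dist: "distinct (map ?h ?rs')" and ind: "independent (set (map ?h ?rs'))"
    using indep unfolding lin_indep_fam_def by auto
  from dist have "distinct ?rs' \<and> inj_on ?h (set ?rs')" by (simp only: distinct_map)
  thus "distinct ?rs'" ..
  have nontrivial: "fst x \<noteq> snd x" if "x \<in> set ?rs'" for x
  proof
    assume "fst x = snd x"
    hence h0: "?h x = 0" by simp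
    have "?h x \<in> set (map ?h ?rs')"
      by (simp only: list.set_map[of ?h ?rs']) (rule imageI[OF that])
    hence "0 \<in> set (map ?h ?rs')" unfolding h0 .
    from dependent_zero[OF this] ind show False by simp
  qed
  show "set ?rs' \<subseteq> projected_reactions R I"
  proof
    fix x assume x: "x \<in> set ?rs'"
    then obtain r where "r \<in> R" "x = proj_reaction I r" using rs by auto
    with nontrivial[OF x] show "x \<in> projected_reactions R I"
      unfolding projected_reactions_def proj_reaction_def by (cases r) auto
  qed
qed

lemma exists_lift_projected_reactions:
  assumes "set rs' \<subseteq> projected_reactions R I"
  obtains rs where "set rs \<subseteq> R" "map (proj_reaction I) rs = rs'"
proof -
  have "\<forall>x\<in>set rs'. \<exists>r. r \<in> R \<and> proj_reaction I r = x"
  proof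
    fix x assume "x \<in> set rs'"
    with assms obtain r where "r \<in> R" "x = (proj_complex I (fst r), proj_complex I (snd r))"
      unfolding projected_reactions_def by auto
    thus "\<exists>r. r \<in> R \<and> proj_reaction I r = x" by (intro exI[of _ r]) (simp add: proj_reaction_def)
  qed
  then obtain lift where lift: "\<forall>x\<in>set rs'. lift x \<in> R \<and> proj_reaction I (lift x) = x"
    by (rule bchoice[THEN exE])
  show thesis by (rule that[of "map lift rs'"]) (use lift in \<open>auto intro: map_idI\<close>)
qed

lemma nonzero_minors_iff_projected_indep:
  fixes R :: "'n::{finite,linorder} reaction set"
  defines "s \<equiv> stoich_dim R"
  assumes I: "I \<in> no_outflow_d R"
  shows "(\<exists>rs. distinct rs \<and> set rs \<subseteq> R \<and> length rs = s \<and>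
            detm s (Ymat_del rs I) * detm s (Gmat_del rs I) \<noteq> 0) \<longleftrightarrow>
         (\<exists>rs. distinct rs \<and> set rs \<subseteq> projected_reactions R I \<and> length rs = s \<and>
            lin_indep_fam (map (\<lambda>r. rvec (fst r) - rvec (snd r)) rs) \<and>
            lin_indep_fam (map (\<lambda>r. rvec (fst r)) rs))"
proof
  assume "\<exists>rs. distinct rs \<and> set rs \<subseteq> R \<and> length rs = s \<and>
    detm s (Ymat_del rs I) * detm s (Gmat_del rs I) \<noteq> 0"
  then obtain rs where rs: "set rs \<subseteq> R" "length rs = s"
    "detm s (Ymat_del rs I) * detm s (Gmat_del rs I) \<noteq> 0" by blast
  hence indep: "lin_indep_fam (map (\<lambda>r. rvec (fst r) - rvec (snd r)) (map (proj_reaction I) rs))"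
    "lin_indep_fam (map (\<lambda>r. rvec (fst r)) (map (proj_reaction I) rs))"
    using nonzero_minors_iff_lin_indep_fam_proj[OF I] unfolding s_def by auto
  with projected_reactions_lin_indep_fam[OF indep(1) rs(1)] rs(2)
  show "\<exists>rs. distinct rs \<and> set rs \<subseteq> projected_reactions R I \<and> length rs = s \<and>
      lin_indep_fam (map (\<lambda>r. rvec (fst r) - rvec (snd r)) rs) \<and>
      lin_indep_fam (map (\<lambda>r. rvec (fst r)) rs)"
    by (intro exI[of _ "map (proj_reaction I) rs"]) simp
next
  assume "\<exists>rs. distinct rs \<and> set rs \<subseteq> projected_reactions R I \<and> length rs = s \<and>
    lin_indep_fam (map (\<lambda>r. rvec (fst r) - rvec (snd r)) rs) \<and>
    lin_indep_fam (map (\<lambda>r. rvec (fst r)) rs)"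
  then obtain rs' where rs': "distinct rs'" "set rs' \<subseteq> projected_reactions R I" "length rs' = s"
      "lin_indep_fam (map (\<lambda>r. rvec (fst r) - rvec (snd r)) rs')"
      "lin_indep_fam (map (\<lambda>r. rvec (fst r)) rs')"
    by blast
  obtain rs where rs: "set rs \<subseteq> R" "map (proj_reaction I) rs = rs'"
    using exists_lift_projected_reactions[OF rs'(2)] by blast
  have "length rs = s" using rs(2) rs'(3) by auto
  moreover have "distinct rs" using rs'(1) rs(2) distinct_map[of "proj_reaction I" rs] by simp
  moreover have "detm s (Ymat_del rs I) * detm s (Gmat_del rs I) \<noteq> 0"
    using nonzero_minors_iff_lin_indep_fam_proj[OF I, of rs] rs(2) rs'(4,5) calculation(1)
    unfolding s_def by simp
  ultimately show "\<exists>rs. distinct rs \<and> set rs \<subseteq> R \<and> length rs = s \<and>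
    detm s (Ymat_del rs I) * detm s (Gmat_del rs I) \<noteq> 0" using rs(1) by blast
qed

section \<open>Non-injectivity\<close>

definition exp_ratio :: "real \<Rightarrow> real" where
  "exp_ratio t = (if t = 0 then 1 else t / (exp t - 1))"

lemma exp_ratio_pos: "exp_ratio t > 0"
proof (cases "t > 0")
  case True thus ?thesis by (simp add: exp_ratio_def divide_pos_pos)
next
  case False
  thus ?thesis by (cases "t = 0") (simp_all add: exp_ratio_def divide_neg_neg)
qed

lemma exp_ratio_mult: "exp_ratio t * (exp t - 1) = t"
  by (simp add: exp_ratio_def)

lemma cmonom_mult_exp: "cmonom (\<chi> k. b $ k * exp (v $ k)) y = cmonom b y * exp (rvec y \<bullet> v)"
proof -
  have "cmonom (\<chi> k. b $ k * exp (v $ k)) y = cmonom b y * (\<Prod>k\<in>UNIV. exp (v $ k) ^ y $ k)"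
    unfolding cmonom_def by (simp add: power_mult_distrib prod.distrib)
  also have "(\<Prod>k\<in>UNIV. exp (v $ k) ^ y $ k) = exp (rvec y \<bullet> v)"
    by (simp add: exp_sum inner_vec_def rvec_def exp_of_nat_mult[symmetric] mult.commute)
  finally show ?thesis .
qed

text \<open>A nonzero kernel vector v of the Jacobian at c = 1 with unit rates is realised as a difference
  of two positive concentrations a, b with a k / b k = exp (v k) whose formation rates agree for
  suitable rates: each reaction term a^y - b^y is a positive multiple of y \<bullet> v.\<close>
lemma not_injective_if_degenerate:
  assumes "degenerate_at R (\<lambda>r. 1) (\<chi> k. 1)"
  shows "\<not> injective_crn R"
proof
  assume inj: "injective_crn R"
  have "monom_grad (\<chi> k. 1) y = rvec y" for y :: "'a complex"
    by (simp add: monom_grad_nonzero_coords cmonom_def Finite_Cartesian_Product.vec_eq_iff)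
  with assms obtain v where v: "v \<in> stoich_subspace R" "v \<noteq> 0"
      "(\<Sum>r\<in>R. (rvec (fst r) \<bullet> v) *\<^sub>R reaction_vec r) = 0"
    unfolding degenerate_at_iff dyad_sum_def by auto
  define b :: "real ^ 'a" where "b = (\<chi> k. exp_ratio (v $ k))"
  define a :: "real ^ 'a" where "a = (\<chi> k. b $ k * exp (v $ k))"
  have pos: "positive_vec a" "positive_vec b"
    by (simp_all add: positive_vec_def a_def b_def exp_ratio_pos)
  have diff: "a - b = v"
    using exp_ratio_mult
    by (simp add: a_def b_def Finite_Cartesian_Product.vec_eq_iff right_diff_distrib)
  define \<kappa> where "\<kappa> r = exp_ratio (rvec (fst r) \<bullet> v) / cmonom b (fst r)" for r :: "'a reaction"
  have rates: "rate_vector R \<kappa>"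
    using exp_ratio_pos cmonom_pos[OF pos(2)] by (simp add: rate_vector_def \<kappa>_def)
  have "\<kappa> r * (cmonom a (fst r) - cmonom b (fst r)) = rvec (fst r) \<bullet> v" for r
  proof -
    have "cmonom b (fst r) > 0" by (rule cmonom_pos[OF pos(2)])
    hence "\<kappa> r * (cmonom a (fst r) - cmonom b (fst r)) = exp_ratio (rvec (fst r) \<bullet> v) * (exp (rvec (fst r) \<bullet> v) - 1)"
      by (simp add: \<kappa>_def a_def cmonom_mult_exp right_diff_distrib)
    thus ?thesis by (simp add: exp_ratio_mult)
  qed
  hence "formation_rate R \<kappa> a - formation_rate R \<kappa> b = (\<Sum>r\<in>R. (rvec (fst r) \<bullet> v) *\<^sub>R reaction_vec r)"
    unfolding formation_rate_def sum_subtractf[symmetric]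
    by (intro sum.cong refl) (simp add: algebra_simps flip: scaleR_diff_left)
  with v(3) have "formation_rate R \<kappa> a = formation_rate R \<kappa> b" by simp
  moreover have "a \<noteq> b" using diff v(2) by auto
  ultimately show False
    using inj rates pos diff v(1) unfolding injective_crn_def by blast
qed

theorem corollary8p1:
  fixes R :: "('n::{finite,linorder}) reaction set"
  assumes "crn R"
  shows "let
      s = stoich_dim R;
      ci = (\<forall>\<kappa>. rate_vector R \<kappa> \<longrightarrow> (\<forall>c. positive_vec c \<longrightarrow> degenerate_at R \<kappa> c));
      cii = (\<forall>rs. distinct rs \<and> set rs \<subseteq> R \<and> length rs = s \<longrightarrow>
               (\<forall>I\<in>no_outflow_d R. detm s (Ymat_del rs I) * detm s (Gmat_del rs I) = 0));
      ciii = (\<forall>I\<in>no_outflow_d R. \<forall>rs. distinct rs \<and> set rs \<subseteq> projected_reactions R I \<and> length rs = s \<longrightarrow>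
               lin_indep_fam (map (\<lambda>r. rvec (fst r) - rvec (snd r)) rs) \<longrightarrow>
               \<not> lin_indep_fam (map (\<lambda>r. rvec (fst r)) rs))
    in (ci \<longleftrightarrow> cii) \<and> (cii \<longleftrightarrow> ciii) \<and>
       ((ci \<or> cii \<or> ciii) \<longrightarrow>
          \<not> injective_crn R \<and>
          (\<forall>\<kappa>. rate_vector R \<kappa> \<longrightarrow> (\<forall>c. formation_rate R \<kappa> c = 0 \<longrightarrow> degenerate_at R \<kappa> c)))"
proof -
  let ?s = "stoich_dim R"
  let ?minor = "\<lambda>I. \<exists>rs. distinct rs \<and> set rs \<subseteq> R \<and> length rs = ?s \<and>
    detm ?s (Ymat_del rs I) * detm ?s (Gmat_del rs I) \<noteq> 0"
  have i_ii: "(\<forall>\<kappa>. rate_vector R \<kappa> \<longrightarrow> (\<forall>c. positive_vec c \<longrightarrow> degenerate_at R \<kappa> c)) \<longleftrightarrow>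
      \<not> (\<exists>I\<in>no_outflow_d R. ?minor I)"
    using exists_nondegenerate_if_nonzero_minors[OF assms]
      exists_nonzero_minors_if_nondegenerate[OF assms] by blast
  have all_degenerate: "degenerate_at R \<kappa> c"
    if "\<not> (\<exists>I\<in>no_outflow_d R. ?minor I)" "rate_vector R \<kappa>" for \<kappa> c
    using that exists_nonzero_minors_if_nondegenerate[OF assms] by blast
  have ii_iii: "(\<exists>I\<in>no_outflow_d R. ?minor I) \<longleftrightarrow>
      (\<exists>I\<in>no_outflow_d R. \<exists>rs. distinct rs \<and> set rs \<subseteq> projected_reactions R I \<and> length rs = ?s \<and>
         lin_indep_fam (map (\<lambda>r. rvec (fst r) - rvec (snd r)) rs) \<and> lin_indep_fam (map (\<lambda>r. rvec (fst r)) rs))"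
    using nonzero_minors_iff_projected_indep[of _ R] by blast
  have "degenerate_at R (\<lambda>r. 1) (\<chi> k. 1)" if "\<not> (\<exists>I\<in>no_outflow_d R. ?minor I)"
    using all_degenerate[OF that] by (simp add: rate_vector_def)
  hence not_inj: "\<not> injective_crn R" if "\<not> (\<exists>I\<in>no_outflow_d R. ?minor I)"
    using that not_injective_if_degenerate by blast
  show ?thesis
    unfolding Let_def using i_ii ii_iii all_degenerate not_inj by blast
qed

end
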